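(* Let $(X,\overline p)$ be a perverse CS set with singular set $\Sigma$. For every point $x\in X$ there exists a path $\beta\colon[0,1]\to X$ with $\beta(0)=x$ and $\beta(]0,1])\subseteq X\setminus\Sigma$. Consequently, the map $\pi_0(X\setminus\Sigma)\to\pi_0^{\overline p}(X)$ is surjective; this map sends the component of a regular point $y$ to the component of the $0$-simplex $y$ in $\mathscr G_{\overline p}X$.
   Context: Filtered spaces. A filtered space of formal dimension $n$ is a nonempty space $X$ with closed subsets $\emptyset=X_{-1}\subseteq\cdots\subseteq X_{n-1}\subsetneq X_n=X$. Strata are the nonempty connected components of $X_i\setminus X_{i-1}$, with codimension $n-i$. The singular set is $\Sigma=X_{n-1}$; points of $X\setminus\Sigma$ are regular. CS sets. A CS set is a filtered space satisfying: - each $X_i\setminus X_{i-1}$ is an $i$-manifold; - each $x\in X_i\setminus X_{i-1}$ with $i\ne n$ has an open neighborhood $V$ and a stratified homeomorphism $\varphi\colon U\times\mathring cL\to V$ with $\varphi(u,\mathtt v)=u$ and $\varphi(U\times\mathring cL_j)=V\cap X_{i+j+1}$. Here $U$ is an open neighborhood of $x$ in $X_i\setminus X_{i-1}$, $L$ is a nonempty compact filtered space of formal dimension $n-i-1$, and $\mathring cL=L\times[0,1[/L\times0$ has apex $\mathtt v$ and filtration $\mathring cL_{i-1}$ in degree $i$. A stratified homeomorphism is a homeomorphism which, with its inverse, sends each stratum into a stratum of no larger codimension. Perversities. A perversity is a map $\overline p$ from strata to $\mathbb Z\cup\{\pm\infty\}$ vanishing on regular strata. Full simplices and the Gajer space.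 A simplex $\sigma\colon\Delta^j\to X$ is $\overline p$-allowable if $\dim\sigma^{-1}S\le j-\operatorname{codim}S+\overline p(S)$ for all singular strata $S$. Here $\dim$ is polyhedral dimension, with $\dim\emptyset=-\infty$. A simplex is $\overline p$-full if it and all its iterated faces are allowable. $\mathscr G_{\overline p}X\subseteq\mathrm{Sing}\,X$ is the simplicial set of full simplices, and $\pi_0^{\overline p}(X)=\pi_0(\mathscr G_{\overline p}X)$. Every regular point, as a $0$-simplex, is $\overline p$-full. *)

theory Defs
  imports "HOL-Analysis.Analysis" "HOL-Homology.Homology"
begin

text \<open>Only the values F i for -1 \<le> i \<le> n are relevant.\<close>

definition filtered_space :: "'a topology \<Rightarrow> int \<Rightarrow> (int \<Rightarrow> 'a set) \<Rightarrow> bool" where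
  "filtered_space X n F \<longleftrightarrow>
     topspace X \<noteq> {} \<and> 0 \<le> n \<and> F (-1) = {} \<and> F n = topspace X \<and>
     (\<forall>i. -1 \<le> i \<and> i \<le> n \<longrightarrow> closedin X (F i)) \<and>
     (\<forall>i. -1 \<le> i \<and> i < n \<longrightarrow> F i \<subseteq> F (i + 1)) \<and>
     F (n - 1) \<noteq> F n"

definition strata_deg :: "'a topology \<Rightarrow> (int \<Rightarrow> 'a set) \<Rightarrow> int \<Rightarrow> 'a set set" where
  "strata_deg X F i = connected_components_of (subtopology X (F i - F (i - 1)))"

definition strata :: "'a topology \<Rightarrow> int \<Rightarrow> (int \<Rightarrow> 'a set) \<Rightarrow> 'a set set" where
  "strata X n F = (\<Union>i\<in>{0..n}. strata_deg X F i)"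

definition stratum_deg :: "'a topology \<Rightarrow> int \<Rightarrow> (int \<Rightarrow> 'a set) \<Rightarrow> 'a set \<Rightarrow> int" where
  "stratum_deg X n F S = (THE i. 0 \<le> i \<and> i \<le> n \<and> S \<in> strata_deg X F i)"

definition codim :: "'a topology \<Rightarrow> int \<Rightarrow> (int \<Rightarrow> 'a set) \<Rightarrow> 'a set \<Rightarrow> int" where
  "codim X n F S = n - stratum_deg X n F S"

definition stratum_preserving ::
  "'a topology \<Rightarrow> int \<Rightarrow> (int \<Rightarrow> 'a set) \<Rightarrow> 'b topology \<Rightarrow> int \<Rightarrow> (int \<Rightarrow> 'b set)
     \<Rightarrow> ('a \<Rightarrow> 'b) \<Rightarrow> bool" where
  "stratum_preserving X n F Y m G f \<longleftrightarrow>
     (\<forall>S\<in>strata X n F. \<exists>S'\<in>strata Y m G. f ` S \<subseteq> S' \<and> codim Y m G S' \<le> codim X n F S)"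

definition stratified_homeomorphism ::
  "'a topology \<Rightarrow> int \<Rightarrow> (int \<Rightarrow> 'a set) \<Rightarrow> 'b topology \<Rightarrow> int \<Rightarrow> (int \<Rightarrow> 'b set)
     \<Rightarrow> ('a \<Rightarrow> 'b) \<Rightarrow> bool" where
  "stratified_homeomorphism X n F Y m G f \<longleftrightarrow>
     (\<exists>g. homeomorphic_maps X Y f g \<and> stratum_preserving X n F Y m G f \<and>
          stratum_preserving Y m G X n F g)"

text \<open>Points of the open cone on L: None is the apex, Some (l,t) with 0<t<1 the class of (l,t).\<close>

definition cone_quot :: "'b \<times> real \<Rightarrow> ('b \<times> real) option" where
  "cone_quot p = (if snd p = 0 then None else Some p)"

definition cone_base :: "'b topology \<Rightarrow> ('b \<times> real) topology" where
  "cone_base L = prod_topology L (subtopology euclideanreal {0..<1})"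

definition cone_top :: "'b topology \<Rightarrow> ('b \<times> real) option topology" where
  "cone_top L = topology (\<lambda>U. U \<subseteq> cone_quot ` topspace (cone_base L) \<and>
                   openin (cone_base L) {p \<in> topspace (cone_base L). cone_quot p \<in> U})"

text \<open>The filtration of the open cone: degree k piece is the open cone on L_(k-1),
  where the cone on the empty set is the apex.\<close>

definition cone_filt :: "(int \<Rightarrow> 'b set) \<Rightarrow> int \<Rightarrow> ('b \<times> real) option set" where
  "cone_filt G k = (if k < 0 then {} else insert None (Some ` (G (k - 1) \<times> {0<..<1})))"

definition is_manifold :: "'a topology \<Rightarrow> nat \<Rightarrow> bool" where
  "is_manifold M d \<longleftrightarrow> Hausdorff_space M \<and>
     (\<forall>x\<in>topspace M. \<exists>W E. openin M W \<and> x \<in> W \<and> openin (Euclidean_space d) E \<and>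
        subtopology M W homeomorphic_space subtopology (Euclidean_space d) E)"

text \<open>CS set, with links taken in the type 'b (the theorem is stated for arbitrary 'b,
  which is equivalent to allowing links of arbitrary type).\<close>

definition CS_set :: "'b itself \<Rightarrow> 'a topology \<Rightarrow> int \<Rightarrow> (int \<Rightarrow> 'a set) \<Rightarrow> bool" where
  "CS_set (_ :: 'b itself) X n F \<longleftrightarrow>
     filtered_space X n F \<and>
     (\<forall>i. 0 \<le> i \<and> i \<le> n \<longrightarrow> is_manifold (subtopology X (F i - F (i - 1))) (nat i)) \<and>
     (\<forall>i x. 0 \<le> i \<and> i < n \<and> x \<in> F i - F (i - 1) \<longrightarrow>
        (\<exists>U V (L :: 'b topology) G (\<phi> :: 'a \<times> ('b \<times> real) option \<Rightarrow> 'a).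
           openin (subtopology X (F i - F (i - 1))) U \<and> x \<in> U \<and>
           openin X V \<and> x \<in> V \<and>
           filtered_space L (n - i - 1) G \<and> compact_space L \<and>
           stratified_homeomorphism
             (prod_topology (subtopology X U) (cone_top L)) n (\<lambda>k. U \<times> cone_filt G (k - i))
             (subtopology X V) n (\<lambda>k. V \<inter> F k) \<phi> \<and>
           (\<forall>u\<in>U. \<phi> (u, None) = u) \<and>
           (\<forall>j. -1 \<le> j \<and> j \<le> n - i - 1 \<longrightarrow>
              \<phi> ` (U \<times> cone_filt G (j + 1)) = V \<inter> F (i + j + 1))))"

definition perversity :: "'a topology \<Rightarrow> int \<Rightarrow> (int \<Rightarrow> 'a set) \<Rightarrow> ('a set \<Rightarrow> ereal) \<Rightarrow> bool" where
  "perversity X n F p \<longleftrightarrow>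
     (\<forall>S\<in>strata X n F. (p S = \<infinity> \<or> p S = -\<infinity> \<or> (\<exists>k::int. p S = ereal (of_int k))) \<and>
                        (codim X n F S = 0 \<longrightarrow> p S = 0))"

definition aff_simplex :: "nat \<Rightarrow> (nat \<Rightarrow> nat \<Rightarrow> real) \<Rightarrow> (nat \<Rightarrow> real) set" where
  "aff_simplex l v = (\<lambda>t. \<lambda>i. \<Sum>k\<le>l. t k * v k i) ` standard_simplex l"

text \<open>A is contained in a compact polyhedron of dimension at most l inside the j-simplex
  (a finite union of affine l-simplices, possibly degenerate).\<close>

definition in_polyhedron_dim :: "nat \<Rightarrow> (nat \<Rightarrow> real) set \<Rightarrow> nat \<Rightarrow> bool" where
  "in_polyhedron_dim j A l \<longleftrightarrow>
     (\<exists>Vs. finite Vs \<and> (\<forall>v\<in>Vs. \<forall>k\<le>l. v k \<in> standard_simplex j) \<and> A \<subseteq> (\<Union>v\<in>Vs. aff_simplex l v))"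

definition polydim :: "nat \<Rightarrow> (nat \<Rightarrow> real) set \<Rightarrow> ereal" where
  "polydim j A = (if A = {} then -\<infinity> else Inf {ereal (real l) | l. in_polyhedron_dim j A l})"

definition allowable ::
  "'a topology \<Rightarrow> int \<Rightarrow> (int \<Rightarrow> 'a set) \<Rightarrow> ('a set \<Rightarrow> ereal) \<Rightarrow> nat \<Rightarrow> ((nat \<Rightarrow> real) \<Rightarrow> 'a) \<Rightarrow> bool" where
  "allowable X n F p j \<sigma> \<longleftrightarrow> singular_simplex j X \<sigma> \<and>
     (\<forall>S\<in>strata X n F. codim X n F S > 0 \<longrightarrow>
        polydim j {t \<in> standard_simplex j. \<sigma> t \<in> S}
          \<le> ereal (of_int (int j - codim X n F S)) + p S)"

fun full ::
  "'a topology \<Rightarrow> int \<Rightarrow> (int \<Rightarrow> 'a set) \<Rightarrow> ('a set \<Rightarrow> ereal) \<Rightarrow> nat \<Rightarrow> ((nat \<Rightarrow> real) \<Rightarrow> 'a) \<Rightarrow> bool" where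
  "full X n F p 0 \<sigma> = allowable X n F p 0 \<sigma>"
| "full X n F p (Suc j) \<sigma> = (allowable X n F p (Suc j) \<sigma> \<and>
     (\<forall>k\<le>Suc j. full X n F p j (singular_face (Suc j) k \<sigma>)))"

definition vertex :: "'a \<Rightarrow> (nat \<Rightarrow> real) \<Rightarrow> 'a" where
  "vertex y = restrict (\<lambda>_. y) (standard_simplex 0)"

text \<open>Elementary relation between vertices of the Gajer simplicial set: the two faces of a
  full 1-simplex; pi_0 is the quotient of the full 0-simplices by the generated equivalence.\<close>

definition gajer_edge ::
  "'a topology \<Rightarrow> int \<Rightarrow> (int \<Rightarrow> 'a set) \<Rightarrow> ('a set \<Rightarrow> ereal)
     \<Rightarrow> ((nat \<Rightarrow> real) \<Rightarrow> 'a) \<Rightarrow> ((nat \<Rightarrow> real) \<Rightarrow> 'a) \<Rightarrow> bool" where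
  "gajer_edge X n F p a b \<longleftrightarrow>
     (\<exists>\<omega>. full X n F p 1 \<omega> \<and> a = singular_face 1 1 \<omega> \<and> b = singular_face 1 0 \<omega>)"

definition gajer_conn ::
  "'a topology \<Rightarrow> int \<Rightarrow> (int \<Rightarrow> 'a set) \<Rightarrow> ('a set \<Rightarrow> ereal)
     \<Rightarrow> ((nat \<Rightarrow> real) \<Rightarrow> 'a) \<Rightarrow> ((nat \<Rightarrow> real) \<Rightarrow> 'a) \<Rightarrow> bool" where
  "gajer_conn X n F p = (\<lambda>a b. gajer_edge X n F p a b \<or> gajer_edge X n F p b a)\<^sup>*\<^sup>*"

definition gajer_class ::
  "'a topology \<Rightarrow> int \<Rightarrow> (int \<Rightarrow> 'a set) \<Rightarrow> ('a set \<Rightarrow> ereal)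
     \<Rightarrow> ((nat \<Rightarrow> real) \<Rightarrow> 'a) \<Rightarrow> ((nat \<Rightarrow> real) \<Rightarrow> 'a) set" where
  "gajer_class X n F p a = {b. full X n F p 0 b \<and> gajer_conn X n F p a b}"

definition gajer_pi0 ::
  "'a topology \<Rightarrow> int \<Rightarrow> (int \<Rightarrow> 'a set) \<Rightarrow> ('a set \<Rightarrow> ereal) \<Rightarrow> ((nat \<Rightarrow> real) \<Rightarrow> 'a) set set" where
  "gajer_pi0 X n F p = gajer_class X n F p ` {a. full X n F p 0 a}"

definition regular_pi0 :: "'a topology \<Rightarrow> int \<Rightarrow> (int \<Rightarrow> 'a set) \<Rightarrow> 'a set set" where
  "regular_pi0 X n F = path_components_of (subtopology X (topspace X - F (n - 1)))"

definition pi0_map ::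
  "'a topology \<Rightarrow> int \<Rightarrow> (int \<Rightarrow> 'a set) \<Rightarrow> ('a set \<Rightarrow> ereal) \<Rightarrow> 'a set
     \<Rightarrow> ((nat \<Rightarrow> real) \<Rightarrow> 'a) set" where
  "pi0_map X n F p C = gajer_class X n F p (vertex (SOME y. y \<in> C))"

end

theory Submission
  imports Defs
begin

(* Near a singular point x of degree i, a conic chart identifies a neighbourhood of x with
   U \<times> (open cone on L), x corresponding to (x, apex). For a point l of the link outside
   L_(m-1), m being the formal dimension of L, the ray s \<mapsto> (x, [l, s/2]) avoids the cone on
   L_(m-1), which the chart maps onto the singular set; so it is a path from x that enters the
   regular part at once. Read as a 1-simplex, such a path meets the singular set at most in its
   initial vertex, hence it is full as soon as that vertex is: every full vertex is joined to a
   regular one in the Gajer space, and paths inside the regular part give full 1-simplices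
   outright. *)

lemma istopology_cone:
  "istopology (\<lambda>U. U \<subseteq> cone_quot ` topspace (cone_base L) \<and>
                   openin (cone_base L) {p \<in> topspace (cone_base L). cone_quot p \<in> U})"
  unfolding istopology_def
proof (rule conjI; intro allI impI)
  fix S T
  assume "S \<subseteq> cone_quot ` topspace (cone_base L) \<and> openin (cone_base L) {p \<in> topspace (cone_base L). cone_quot p \<in> S}"
    and "T \<subseteq> cone_quot ` topspace (cone_base L) \<and> openin (cone_base L) {p \<in> topspace (cone_base L). cone_quot p \<in> T}"
  moreover have "{p \<in> topspace (cone_base L). cone_quot p \<in> S \<inter> T} =
      {p \<in> topspace (cone_base L). cone_quot p \<in> S} \<inter> {p \<in> topspace (cone_base L). cone_quot p \<in> T}"
    by auto
  ultimately show "S \<inter> T \<subseteq> cone_quot ` topspace (cone_base L) \<and>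
      openin (cone_base L) {p \<in> topspace (cone_base L). cone_quot p \<in> S \<inter> T}"
    by auto
next
  fix K
  assume K: "\<forall>U\<in>K. U \<subseteq> cone_quot ` topspace (cone_base L) \<and>
      openin (cone_base L) {p \<in> topspace (cone_base L). cone_quot p \<in> U}"
  have "{p \<in> topspace (cone_base L). cone_quot p \<in> \<Union>K} =
      (\<Union>U\<in>K. {p \<in> topspace (cone_base L). cone_quot p \<in> U})"
    by auto
  with K show "\<Union>K \<subseteq> cone_quot ` topspace (cone_base L) \<and>
      openin (cone_base L) {p \<in> topspace (cone_base L). cone_quot p \<in> \<Union>K}"
    by auto
qed

lemma openin_cone_top:
  "openin (cone_top L) U \<longleftrightarrow> U \<subseteq> cone_quot ` topspace (cone_base L) \<and>
     openin (cone_base L) {p \<in> topspace (cone_base L). cone_quot p \<in> U}"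
  unfolding cone_top_def by (simp only: topology_inverse'[OF istopology_cone])

lemma topspace_cone_top_quot: "topspace (cone_top L) = cone_quot ` topspace (cone_base L)"
proof (rule subset_antisym)
  show "topspace (cone_top L) \<subseteq> cone_quot ` topspace (cone_base L)"
    using openin_topspace[of "cone_top L"] openin_cone_top by blast
  have "{p \<in> topspace (cone_base L). cone_quot p \<in> cone_quot ` topspace (cone_base L)} =
      topspace (cone_base L)"
    by blast
  then have "openin (cone_top L) (cone_quot ` topspace (cone_base L))"
    by (simp add: openin_cone_top)
  then show "cone_quot ` topspace (cone_base L) \<subseteq> topspace (cone_top L)"
    by (rule openin_subset)
qed

lemma topspace_cone_top:
  assumes "topspace L \<noteq> {}"
  shows "topspace (cone_top L) = insert None (Some ` (topspace L \<times> {0<..<1}))"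
proof -
  obtain l where "l \<in> topspace L" using assms by blast
  then have "None \<in> cone_quot ` (topspace L \<times> {0..<1})"
    by (auto simp: cone_quot_def image_iff intro!: bexI[of _ "(l, 0)"])
  then show ?thesis
    unfolding topspace_cone_top_quot cone_base_def
    by (auto simp: cone_quot_def image_iff)
qed

lemma continuous_map_cone_quot: "continuous_map (cone_base L) (cone_top L) cone_quot"
  unfolding continuous_map_def topspace_cone_top_quot
  using openin_cone_top by blast

lemma continuous_map_cone_ray:
  assumes "l \<in> topspace L"
  shows "continuous_map (top_of_set {0..1}) (cone_top L) (\<lambda>s. cone_quot (l, s / 2))"
proof -
  have "continuous_map (top_of_set {0..1}) (cone_base L) (\<lambda>s. (l, s / 2))"
    unfolding cone_base_def using assms
    by (intro continuous_map_pairedI)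
      (auto simp: continuous_map_in_subtopology intro: continuous_on_divide)
  then show ?thesis
    using continuous_map_compose[OF _ continuous_map_cone_quot] by (simp add: o_def)
qed

lemma filtered_space_mono:
  assumes X: "filtered_space X n F" and "-1 \<le> a" "a \<le> b" "b \<le> n"
  shows "F a \<subseteq> F b"
  using \<open>a \<le> b\<close> \<open>b \<le> n\<close>
proof (induction b rule: int_ge_induct)
  case (step b)
  then have "F b \<subseteq> F (b + 1)"
    using X \<open>-1 \<le> a\<close> by (simp add: filtered_space_def)
  with step show ?case by simp
qed simp

lemma filtered_space_subset_topspace:
  assumes "filtered_space X n F" "-1 \<le> a" "a \<le> n"
  shows "F a \<subseteq> topspace X"
  using assms closedin_subset unfolding filtered_space_def by blast

lemma filtered_space_level:
  assumes X: "filtered_space X n F" and x: "x \<in> F (n - 1)"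
  obtains i where "0 \<le> i" "i < n" "x \<in> F i" "x \<notin> F (i - 1)"
proof -
  define k where "k = (LEAST k::nat. x \<in> F (int k - 1))"
  have "0 \<le> n" using X by (simp add: filtered_space_def)
  then have "x \<in> F (int (nat n) - 1)" using x by simp
  then have xk: "x \<in> F (int k - 1)" and "k \<le> nat n"
    unfolding k_def by (rule LeastI, rule Least_le)
  moreover have "k \<noteq> 0"
    using xk X by (auto simp: filtered_space_def)
  moreover have "x \<notin> F (int (k - 1) - 1)"
    unfolding k_def by (rule not_less_Least) (use \<open>k \<noteq> 0\<close> k_def in simp)
  ultimately show ?thesis
    by (intro that[of "int k - 1"]) auto
qed

lemma singular_stratum_subset:
  assumes X: "filtered_space X n F" and S: "S \<in> strata X n F" and "0 < codim X n F S"
  shows "S \<subseteq> F (n - 1)"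
proof -
  have in_level: "S \<noteq> {} \<and> S \<subseteq> F i - F (i - 1)" if "S \<in> strata_deg X F i" for i
    using that nonempty_connected_components_of connected_components_of_subset
    unfolding strata_deg_def by fastforce
  have low: "S \<subseteq> F (n - 1)" if "0 \<le> i" "i < n" "S \<in> strata_deg X F i" for i
    using in_level[OF that(3)] filtered_space_mono[OF X, of i "n - 1"] that by auto
  obtain i where i: "0 \<le> i" "i \<le> n" "S \<in> strata_deg X F i"
    using S unfolding strata_def by auto
  show ?thesis
  proof (cases "i < n")
    case True
    with low i show ?thesis by blast
  next
    case False
    with i have "i = n" by simp
    have "stratum_deg X n F S = n"
      unfolding stratum_deg_def
    proof (rule the_equality)
      show "0 \<le> n \<and> n \<le> n \<and> S \<in> strata_deg X F n" using i \<open>i = n\<close> by simp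
    next
      fix i' assume "0 \<le> i' \<and> i' \<le> n \<and> S \<in> strata_deg X F i'"
      then show "i' = n"
        using low[of i'] in_level[OF i(3)] \<open>i = n\<close> by (cases "i' < n") auto
    qed
    with \<open>0 < codim X n F S\<close> show ?thesis by (simp add: codim_def)
  qed
qed

lemma singular_simplex_vertex:
  assumes "y \<in> topspace X"
  shows "singular_simplex 0 X (vertex y)"
  unfolding singular_simplex_def vertex_def
  using assms by (auto intro: continuous_map_eq[of _ _ "\<lambda>_. y"])

lemma singular_simplex_0_eq_vertex:
  assumes "singular_simplex 0 X a"
  obtains x where "x \<in> topspace X" "a = vertex x"
proof
  let ?e = "\<lambda>j. if j = 0 then 1 else 0 :: real"
  show "a ?e \<in> topspace X"
    using assms by (auto simp: singular_simplex_def continuous_map_def standard_simplex_0)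
  show "a = vertex (a ?e)"
    using assms extensional_arb[of a "standard_simplex 0"]
    by (auto simp: singular_simplex_def vertex_def standard_simplex_0)
qed

(* The barycentric coordinate t 0 is the path parameter: vertex e_0 goes to g 1, vertex e_1 to g 0. *)
definition path_simplex :: "(real \<Rightarrow> 'a) \<Rightarrow> (nat \<Rightarrow> real) \<Rightarrow> 'a" where
  "path_simplex g = restrict (\<lambda>t. g (t 0)) (standard_simplex 1)"

lemma singular_simplex_path_simplex:
  assumes "pathin X g"
  shows "singular_simplex 1 X (path_simplex g)"
proof -
  have "continuous_map (subtopology (powertop_real UNIV) (standard_simplex 1)) euclideanreal (\<lambda>t. t 0)"
    by (metis UNIV_I continuous_map_from_subtopology continuous_map_product_projection)
  then have "continuous_map (subtopology (powertop_real UNIV) (standard_simplex 1)) (top_of_set {0..1})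
      (\<lambda>t. t 0)"
    by (auto simp: continuous_map_in_subtopology standard_simplex_def)
  then have "continuous_map (subtopology (powertop_real UNIV) (standard_simplex 1)) X (\<lambda>t. g (t 0))"
    using assms continuous_map_compose[of _ _ "\<lambda>t. t 0" X g] by (simp add: pathin_def o_def)
  then show ?thesis
    unfolding singular_simplex_def path_simplex_def by (auto intro: continuous_map_eq)
qed

lemma singular_face_path_simplex_0: "singular_face 1 0 (path_simplex g) = vertex (g 0)"
proof -
  have "simplical_face 0 (\<lambda>j. if j = 0 then 1 else 0) = (\<lambda>j. if j = 1 then 1 else 0 :: real)"
    by (auto simp: simplical_face_def)
  then show ?thesis
    by (auto simp: singular_face_def path_simplex_def vertex_def standard_simplex_0)
qed

lemma singular_face_path_simplex_1: "singular_face 1 1 (path_simplex g) = vertex (g 1)"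
proof -
  have "simplical_face 1 (\<lambda>j. if j = 0 then 1 else 0) = (\<lambda>j. if j = 0 then 1 else 0 :: real)"
    by (auto simp: simplical_face_def)
  then show ?thesis
    by (auto simp: singular_face_def path_simplex_def vertex_def standard_simplex_0)
qed

lemma polydim_subset_singleton:
  assumes "A \<subseteq> {v}" "v \<in> standard_simplex j"
  shows "polydim j A \<le> 0"
proof (cases "A = {}")
  case False
  have "aff_simplex 0 (\<lambda>_. v) = {v}"
    by (auto simp: aff_simplex_def standard_simplex_0)
  then have "in_polyhedron_dim j A 0"
    unfolding in_polyhedron_dim_def using assms by (intro exI[of _ "{\<lambda>_. v}"]) auto
  then have "Inf {ereal (real l) | l. in_polyhedron_dim j A l} \<le> 0"
    by (intro Inf_lower) force
  with False show ?thesis by (simp add: polydim_def)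
qed (simp add: polydim_def)

lemma polydim_nonneg:
  assumes "A \<noteq> {}"
  shows "0 \<le> polydim j A"
  using assms by (auto simp: polydim_def intro!: Inf_greatest)

lemma allowable_if_regular:
  assumes X: "filtered_space X n F" and "singular_simplex j X \<sigma>"
    and reg: "\<sigma> ` standard_simplex j \<inter> F (n - 1) = {}"
  shows "allowable X n F p j \<sigma>"
  unfolding allowable_def
proof (intro conjI ballI impI \<open>singular_simplex j X \<sigma>\<close>)
  fix S assume "S \<in> strata X n F" "0 < codim X n F S"
  with reg singular_stratum_subset[OF X] have "{t \<in> standard_simplex j. \<sigma> t \<in> S} = {}"
    by blast
  then show "polydim j {t \<in> standard_simplex j. \<sigma> t \<in> S} \<le> ereal (of_int (int j - codim X n F S)) + p S"
    by (simp add: polydim_def)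
qed

lemma allowable_vertex_regular:
  assumes "filtered_space X n F" "y \<in> topspace X - F (n - 1)"
  shows "allowable X n F p 0 (vertex y)"
  using assms by (intro allowable_if_regular singular_simplex_vertex) (auto simp: vertex_def)

lemma allowable_vertex_singular:
  assumes "allowable X n F p 0 (vertex x)" "S \<in> strata X n F" "0 < codim X n F S" "x \<in> S"
  shows "0 \<le> ereal (of_int (- codim X n F S)) + p S"
proof -
  let ?e = "\<lambda>j. if j = 0 then 1 else 0 :: real"
  have "{t \<in> standard_simplex 0. vertex x t \<in> S} = {?e}"
    using \<open>x \<in> S\<close> by (auto simp: vertex_def standard_simplex_0)
  moreover have "0 \<le> polydim 0 {?e}"
    by (rule polydim_nonneg) simp
  ultimately show ?thesis
    using assms(1-3) unfolding allowable_def by force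
qed

lemma standard_simplex_1_eq:
  assumes "t \<in> standard_simplex 1" "t 0 = 0"
  shows "t = (\<lambda>j. if j = 1 then 1 else 0)"
proof
  fix j :: nat
  have "t 0 + t 1 = 1" "\<And>i. 1 < i \<Longrightarrow> t i = 0"
    using assms(1) by (auto simp: standard_simplex_def)
  moreover consider "j = 0" | "j = 1" | "1 < j" by linarith
  ultimately show "t j = (if j = 1 then 1 else 0)"
    using assms(2) by (metis add_0)
qed

lemma allowable_path_simplex:
  assumes X: "filtered_space X n F" and g: "pathin X g"
    and g0: "allowable X n F p 0 (vertex (g 0))"
    and reg: "g ` {0<..1} \<subseteq> topspace X - F (n - 1)"
  shows "allowable X n F p 1 (path_simplex g)"
  unfolding allowable_def
proof (intro conjI ballI impI singular_simplex_path_simplex[OF g])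
  fix S assume S: "S \<in> strata X n F" and c: "0 < codim X n F S"
  let ?A = "{t \<in> standard_simplex 1. path_simplex g t \<in> S}"
  let ?e = "\<lambda>j. if j = 1 then 1 else 0 :: real"
  have e: "t = ?e" if t: "t \<in> ?A" for t
  proof (rule standard_simplex_1_eq)
    show "t \<in> standard_simplex 1" using t by simp
    have "t 0 \<in> {0..1}" and "g (t 0) \<in> F (n - 1)"
      using t singular_stratum_subset[OF X S c] by (auto simp: standard_simplex_def path_simplex_def)
    then show "t 0 = 0"
      using reg by (metis Diff_iff atLeastAtMost_iff greaterThanAtMost_iff image_subset_iff
          order_le_less)
  qed
  then have A: "?A \<subseteq> {?e}"
    by blast
  show "polydim 1 ?A \<le> ereal (of_int (int 1 - codim X n F S)) + p S"
  proof (cases "g 0 \<in> S")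
    case True
    have "polydim 1 ?A \<le> 0"
      using A by (rule polydim_subset_singleton) simp
    also have "\<dots> \<le> ereal (of_int (- codim X n F S)) + p S"
      using allowable_vertex_singular[OF g0 S c True] .
    also have "\<dots> \<le> ereal (of_int (int 1 - codim X n F S)) + p S"
      by (intro add_right_mono) simp
    finally show ?thesis .
  next
    case False
    have "?A = {}"
    proof (rule equals0I)
      fix t assume t: "t \<in> ?A"
      then have "path_simplex g ?e \<in> S"
        using e[OF t] by simp
      with False show False
        by (simp add: path_simplex_def)
    qed
    then show ?thesis by (simp add: polydim_def)
  qed
qed

lemma full_1_iff:
  "full X n F p 1 \<omega> \<longleftrightarrow> allowable X n F p 1 \<omega> \<and>
     allowable X n F p 0 (singular_face 1 0 \<omega>) \<and> allowable X n F p 0 (singular_face 1 1 \<omega>)"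
  by (auto simp: le_Suc_eq)

lemma full_path_simplex:
  assumes X: "filtered_space X n F" and "pathin X g"
    and g0: "allowable X n F p 0 (vertex (g 0))"
    and reg: "g ` {0<..1} \<subseteq> topspace X - F (n - 1)"
  shows "full X n F p 1 (path_simplex g)"
  unfolding full_1_iff singular_face_path_simplex_0 singular_face_path_simplex_1
proof (intro conjI allowable_path_simplex[OF assms] g0 allowable_vertex_regular[OF X])
  have "(1::real) \<in> {0<..1}" by simp
  with reg show "g 1 \<in> topspace X - F (n - 1)" by blast
qed

lemma equivp_gajer_conn: "equivp (gajer_conn X n F p)"
  unfolding gajer_conn_def by (intro equivp_rtranclp sympI) blast

lemma gajer_class_path:
  assumes "filtered_space X n F" "pathin X g"
    and "allowable X n F p 0 (vertex (g 0))"
    and "g ` {0<..1} \<subseteq> topspace X - F (n - 1)"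
  shows "gajer_class X n F p (vertex (g 1)) = gajer_class X n F p (vertex (g 0))"
proof -
  have "gajer_edge X n F p (vertex (g 1)) (vertex (g 0))"
    unfolding gajer_edge_def using full_path_simplex[OF assms]
    by (metis singular_face_path_simplex_0 singular_face_path_simplex_1)
  then have "gajer_conn X n F p (vertex (g 1)) = gajer_conn X n F p (vertex (g 0))"
    using equivp_gajer_conn unfolding equivp_def gajer_conn_def by blast
  then show ?thesis by (simp add: gajer_class_def)
qed

lemma CS_set_chart:
  fixes link_type :: "'b itself"
  assumes "CS_set link_type X n F" "0 \<le> i" "i < n" "x \<in> F i - F (i - 1)"
  obtains U V and L :: "'b topology" and G \<phi> where
    "x \<in> U" "U \<subseteq> topspace X" "filtered_space L (n - i - 1) G"
    "homeomorphic_map (prod_topology (subtopology X U) (cone_top L)) (subtopology X V) \<phi>"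
    "\<phi> (x, None) = x" "\<phi> ` (U \<times> cone_filt G (n - i - 1)) = V \<inter> F (n - 1)"
proof -
  obtain U V and L :: "'b topology" and G \<phi> where
    U: "openin (subtopology X (F i - F (i - 1))) U" "x \<in> U"
    and L: "filtered_space L (n - i - 1) G"
    and SH: "stratified_homeomorphism
             (prod_topology (subtopology X U) (cone_top L)) n (\<lambda>k. U \<times> cone_filt G (k - i))
             (subtopology X V) n (\<lambda>k. V \<inter> F k) \<phi>"
    and apex: "\<forall>u\<in>U. \<phi> (u, None) = u"
    and filt: "\<forall>j. -1 \<le> j \<and> j \<le> n - i - 1 \<longrightarrow>
              \<phi> ` (U \<times> cone_filt G (j + 1)) = V \<inter> F (i + j + 1)"
    using assms(1)[unfolded CS_set_def, THEN conjunct2, THEN conjunct2, rule_format, of i x] assms(2-4)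
    by blast
  show thesis
  proof (rule that[OF U(2) _ L])
    show "U \<subseteq> topspace X"
      using openin_subset[OF U(1)] by auto
    show "homeomorphic_map (prod_topology (subtopology X U) (cone_top L)) (subtopology X V) \<phi>"
      using SH homeomorphic_maps_map unfolding stratified_homeomorphism_def by blast
    show "\<phi> (x, None) = x"
      using apex U(2) by blast
    show "\<phi> ` (U \<times> cone_filt G (n - i - 1)) = V \<inter> F (n - 1)"
      using filt[rule_format, of "n - i - 2"] assms(3) by simp
  qed
qed

lemma cone_chart_off_stratum:
  assumes \<phi>: "homeomorphic_map (prod_topology (subtopology X U) (cone_top L)) (subtopology X V) \<phi>"
    and sing: "\<phi> ` (U \<times> cone_filt G m) = V \<inter> S" and "0 \<le> m" "G (m - 1) \<subseteq> topspace L"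
    and "U \<subseteq> topspace X" "u \<in> U" "l \<in> topspace L - G (m - 1)" "t \<in> {0<..<1}"
  shows "\<phi> (u, Some (l, t)) \<in> topspace X - S"
proof -
  let ?C = "prod_topology (subtopology X U) (cone_top L)"
  have "topspace (cone_top L) = insert None (Some ` (topspace L \<times> {0<..<1}))"
    using assms(7) by (intro topspace_cone_top) blast
  then have topC: "topspace ?C = U \<times> insert None (Some ` (topspace L \<times> {0<..<1}))"
    using \<open>U \<subseteq> topspace X\<close> by auto
  then have c: "(u, Some (l, t)) \<in> topspace ?C"
    using assms(6-8) by auto
  then have "\<phi> (u, Some (l, t)) \<in> topspace X \<inter> V"
    using homeomorphic_imp_surjective_map[OF \<phi>] by auto
  moreover have "U \<times> cone_filt G m \<subseteq> topspace ?C"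
    using topC \<open>0 \<le> m\<close> \<open>G (m - 1) \<subseteq> topspace L\<close> by (auto simp: cone_filt_def)
  then have "\<phi> (u, Some (l, t)) \<notin> \<phi> ` (U \<times> cone_filt G m)"
    using homeomorphic_imp_injective_map[OF \<phi>] c assms(7) \<open>0 \<le> m\<close>
    by (auto simp: inj_on_image_mem_iff cone_filt_def)
  ultimately show ?thesis
    using sing by blast
qed

lemma path_into_regular_part:
  fixes link_type :: "'b itself"
  assumes CS: "CS_set link_type X n F" and x: "x \<in> topspace X"
  obtains \<beta> where "pathin X \<beta>" "\<beta> 0 = x" "\<beta> ` {0<..1} \<subseteq> topspace X - F (n - 1)"
proof (cases "x \<in> F (n - 1)")
  case False
  with x show ?thesis
    by (intro that[of "\<lambda>_. x"]) (auto simp: pathin_def)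
next
  case True
  have X: "filtered_space X n F"
    using CS by (simp add: CS_set_def)
  obtain i where i: "0 \<le> i" "i < n" "x \<in> F i - F (i - 1)"
    using filtered_space_level[OF X True] by blast
  define m where "m = n - i - 1"
  obtain U V and L :: "'b topology" and G \<phi> where
    U: "x \<in> U" "U \<subseteq> topspace X" and L: "filtered_space L m G"
    and \<phi>: "homeomorphic_map (prod_topology (subtopology X U) (cone_top L)) (subtopology X V) \<phi>"
    and apex: "\<phi> (x, None) = x" and sing: "\<phi> ` (U \<times> cone_filt G m) = V \<inter> F (n - 1)"
    using CS_set_chart[OF CS i] unfolding m_def by metis
  have "0 \<le> m" "G m = topspace L" "G (m - 1) \<noteq> G m"
    using L i unfolding filtered_space_def m_def by auto
  moreover have "G (m - 1) \<subseteq> topspace L"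
    using filtered_space_subset_topspace[OF L] \<open>0 \<le> m\<close> by simp
  ultimately obtain l where l: "l \<in> topspace L - G (m - 1)"
    by blast
  define \<beta> where "\<beta> = (\<lambda>s::real. \<phi> (x, cone_quot (l, s / 2)))"
  show ?thesis
  proof (rule that)
    have "continuous_map (top_of_set {0..1}) (prod_topology (subtopology X U) (cone_top L))
        (\<lambda>s. (x, cone_quot (l, s / 2)))"
      using U l continuous_map_cone_ray[of l L] by (intro continuous_map_pairedI) auto
    then have "continuous_map (top_of_set {0..1}) (subtopology X V) \<beta>"
      unfolding \<beta>_def
      by (rule continuous_map_compose[OF _ homeomorphic_imp_continuous_map[OF \<phi>], unfolded o_def])
    then show "pathin X \<beta>"
      by (simp add: pathin_def continuous_map_in_subtopology)
    show "\<beta> 0 = x"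
      by (simp add: \<beta>_def cone_quot_def apex)
    show "\<beta> ` {0<..1} \<subseteq> topspace X - F (n - 1)"
    proof (rule image_subsetI)
      fix s :: real assume "s \<in> {0<..1}"
      then have "s / 2 \<in> {0<..<1}" "\<beta> s = \<phi> (x, Some (l, s / 2))"
        by (auto simp: \<beta>_def cone_quot_def)
      then show "\<beta> s \<in> topspace X - F (n - 1)"
        using cone_chart_off_stratum[OF \<phi> sing \<open>0 \<le> m\<close> \<open>G (m - 1) \<subseteq> topspace L\<close> U(2,1) l]
        by simp
    qed
  qed
qed

lemma gajer_class_regular_path:
  assumes X: "filtered_space X n F" and g: "pathin (subtopology X (topspace X - F (n - 1))) g"
  shows "gajer_class X n F p (vertex (g 1)) = gajer_class X n F p (vertex (g 0))"
proof (rule gajer_class_path[OF X])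
  have "g ` {0..1} \<subseteq> topspace X - F (n - 1)"
    using g by (auto simp: pathin_subtopology)
  then show "pathin X g" "g ` {0<..1} \<subseteq> topspace X - F (n - 1)"
    "allowable X n F p 0 (vertex (g 0))"
    using g by (auto simp: pathin_subtopology intro: allowable_vertex_regular[OF X])
qed

lemma pi0_map_eq_gajer_class:
  assumes X: "filtered_space X n F" and C: "C \<in> regular_pi0 X n F" and "y \<in> C"
  shows "pi0_map X n F p C = gajer_class X n F p (vertex y)"
proof -
  let ?Z = "subtopology X (topspace X - F (n - 1))"
  have "(SOME y. y \<in> C) \<in> C"
    using \<open>y \<in> C\<close> by (rule someI)
  with C \<open>y \<in> C\<close> have "path_component_of ?Z (SOME y. y \<in> C) y"
    by (auto simp: regular_pi0_def path_components_of_def path_component_of_equiv)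
  then obtain g where "pathin ?Z g" "g 0 = (SOME y. y \<in> C)" "g 1 = y"
    by (auto simp: path_component_of_def)
  with gajer_class_regular_path[OF X, of g p] show ?thesis
    by (simp add: pi0_map_def)
qed

lemma pi0_map_in_gajer_pi0:
  assumes X: "filtered_space X n F" and C: "C \<in> regular_pi0 X n F"
  shows "pi0_map X n F p C \<in> gajer_pi0 X n F p"
proof -
  have "C \<subseteq> topspace X - F (n - 1)"
    using C path_components_of_subset by (fastforce simp: regular_pi0_def)
  moreover have "(SOME y. y \<in> C) \<in> C"
    using C nonempty_path_components_of some_in_eq by (metis regular_pi0_def)
  ultimately have "full X n F p 0 (vertex (SOME y. y \<in> C))"
    using allowable_vertex_regular[OF X] by auto
  then show ?thesis
    by (auto simp: pi0_map_def gajer_pi0_def)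
qed

lemma gajer_pi0_subset_pi0_map_image:
  fixes link_type :: "'b itself"
  assumes CS: "CS_set link_type X n F"
  shows "gajer_pi0 X n F p \<subseteq> pi0_map X n F p ` regular_pi0 X n F"
proof
  fix D assume "D \<in> gajer_pi0 X n F p"
  then obtain a where a: "allowable X n F p 0 a" and D: "D = gajer_class X n F p a"
    by (auto simp: gajer_pi0_def)
  obtain x where x: "x \<in> topspace X" and "a = vertex x"
    using a by (auto simp: allowable_def elim: singular_simplex_0_eq_vertex)
  have X: "filtered_space X n F"
    using CS by (simp add: CS_set_def)
  obtain \<beta> where \<beta>: "pathin X \<beta>" "\<beta> 0 = x" "\<beta> ` {0<..1} \<subseteq> topspace X - F (n - 1)"
    using path_into_regular_part[OF CS x] .
  moreover have "(1::real) \<in> {0<..1}"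
    by simp
  ultimately have "\<beta> 1 \<in> topspace X - F (n - 1)"
    by blast
  define C where "C = Collect (path_component_of (subtopology X (topspace X - F (n - 1))) (\<beta> 1))"
  have C: "C \<in> regular_pi0 X n F" and "\<beta> 1 \<in> C"
    using \<open>\<beta> 1 \<in> topspace X - F (n - 1)\<close> unfolding C_def
    by (simp_all add: regular_pi0_def path_component_in_path_components_of path_component_of_refl)
  have "D = gajer_class X n F p (vertex (\<beta> 1))"
    using gajer_class_path[OF X \<beta>(1) _ \<beta>(3)] a D \<beta>(2) \<open>a = vertex x\<close> by simp
  also have "\<dots> = pi0_map X n F p C"
    using pi0_map_eq_gajer_class[OF X C \<open>\<beta> 1 \<in> C\<close>] by simp
  finally show "D \<in> pi0_map X n F p ` regular_pi0 X n F"
    using C by blast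
qed

theorem mainTheorem16:
  fixes X :: "'a topology" and n :: int and F :: "int \<Rightarrow> 'a set"
    and p :: "'a set \<Rightarrow> ereal" and link_type :: "'b itself"
  assumes "CS_set link_type X n F"
    and "perversity X n F p"
  shows "(\<forall>x\<in>topspace X. \<exists>\<beta>. pathin X \<beta> \<and> \<beta> 0 = x \<and> \<beta> ` {0<..1} \<subseteq> topspace X - F (n - 1))
       \<and> (\<forall>C\<in>regular_pi0 X n F. \<forall>y\<in>C. pi0_map X n F p C = gajer_class X n F p (vertex y))
       \<and> pi0_map X n F p ` regular_pi0 X n F = gajer_pi0 X n F p"
proof (intro conjI ballI)
  have X: "filtered_space X n F"
    using assms(1) by (simp add: CS_set_def)
  show "\<exists>\<beta>. pathin X \<beta> \<and> \<beta> 0 = x \<and> \<beta> ` {0<..1} \<subseteq> topspace X - F (n - 1)"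
    if "x \<in> topspace X" for x
    using path_into_regular_part[OF assms(1) that] by metis
  show "pi0_map X n F p C = gajer_class X n F p (vertex y)"
    if "C \<in> regular_pi0 X n F" "y \<in> C" for C y
    using pi0_map_eq_gajer_class[OF X that] .
  show "pi0_map X n F p ` regular_pi0 X n F = gajer_pi0 X n F p"
    using pi0_map_in_gajer_pi0[OF X] gajer_pi0_subset_pi0_map_image[OF assms(1)] by blast
qed

end
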